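(* For every integer $n\ge1$ and every $\eta>0$, $$\sup_{0\ne f\in\mathcal{T}_n(\eta)}\frac{|f'(0)|}{\|f\|_{L_2[0,1]}} \ge (1+\varepsilon_n)\,3^{-1/2}\,n^3,$$ where $1+\varepsilon_n := 3^{1/2}n^{-3}\left(\sum_{k=0}^{n-1}k^2(k+1)^2(2k+1)\right)^{1/2}$ (so $\varepsilon_n\to0$ as $n\to\infty$).
   Context: For $\eta>0$, $\mathcal{T}_n(\eta)$ denotes the set of all functions $f(t)=\sum_{j=1}^na_je^{i\lambda_jt}$ with $a_j\in\mathbb{C}$ and real $0<\lambda_1<\lambda_2<\cdots<\lambda_n<\eta$. $\|f\|_{L_2[0,1]}=(\int_0^1|f|^2)^{1/2}$. *)

theory Defs
  imports "HOL-Analysis.Analysis"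
begin

definition expsum :: "nat \<Rightarrow> (nat \<Rightarrow> complex) \<Rightarrow> (nat \<Rightarrow> real) \<Rightarrow> real \<Rightarrow> complex" where
  "expsum n a lam t = (\<Sum>j<n. a j * exp (\<i> * complex_of_real (lam j * t)))"

definition Tn :: "nat \<Rightarrow> real \<Rightarrow> (real \<Rightarrow> complex) set" where
  "Tn n \<eta> = {f. \<exists>a lam. strict_mono_on {..<n} lam \<and> (\<forall>j<n. 0 < lam j \<and> lam j < \<eta>)
                        \<and> f = expsum n a lam}"

definition L2norm01 :: "(real \<Rightarrow> complex) \<Rightarrow> real" where
  "L2norm01 f = sqrt (integral {0..1} (\<lambda>t. (cmod (f t))\<^sup>2))"

definition eps_n :: "nat \<Rightarrow> real" where
  "eps_n n = sqrt 3 * real n powr (-3)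
     * sqrt (\<Sum>k<n. real k ^ 2 * real (k + 1) ^ 2 * real (2 * k + 1)) - 1"

end

theory Submission
  imports
    Defs
    "HOL-Computational_Algebra.Polynomial"
    "HOL-Probability.Characteristic_Functions"
begin

text \<open>
  Among real polynomials p of degree < n, the functional p \<mapsto> p'(0) is represented in L2[0,1]
  by K = \<Sum>k<n. (2k+1) Q_k'(0) Q_k, where the Q_k are the shifted Legendre polynomials
  (orthogonal on [0,1], with \<integral> Q_k^2 = 1/(2k+1)). Hence K'(0) = \<integral> K^2 = \<Sum>k<n. (2k+1) Q_k'(0)^2
  = \<Sum>k<n. k^2 (k+1)^2 (2k+1) =: S, and K'(0) / \<parallel>K\<parallel> = \<surd>S.

  Substituting (e^(i\<delta>t) - 1)/(i\<delta>) for t in K and multiplying by e^(ict) gives, by the binomial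
  theorem, an exponential sum with frequencies c, c + \<delta>, ..., c + (n-1)\<delta>; it tends to
  e^(ict) K(t) uniformly on [0,1] as \<delta> \<rightarrow> 0. Its derivative at 0 is S + ic K(0). Since
  K(0) \<noteq> 0, this imaginary part is a fixed gain that absorbs the O(\<delta>) error in the norm,
  so for small \<delta> the ratio is already at least \<surd>S.
\<close>

section \<open>Products of consecutive integers\<close>

lemma prod_atLeast1_atMost_plus: "(\<Prod>i=1..k. real m + real i) = fact (m + k) / fact m"
proof (induction k)
  case (Suc k)
  have "(\<Prod>i=1..Suc k. real m + real i) = (\<Prod>i=1..k. real m + real i) * real (Suc (m + k))"
    by simp
  then show ?case using Suc by simp
qed simp

lemma prod_atMost_plus_fact: "(\<Prod>l\<le>k. real m + 1 + real l) = fact (m + Suc k) / fact m"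
proof -
  have "(\<Prod>l\<le>k. real m + 1 + real l) = (\<Prod>i=1..Suc k. real m + real i)"
    using prod.atLeast1_atMost_eq[of "\<lambda>i. real m + real i" "Suc k"]
    by (simp add: lessThan_Suc_atMost ac_simps)
  then show ?thesis by (simp only: prod_atLeast1_atMost_plus)
qed

lemma prod_atLeast1_atMost_Suc_diff: "(\<Prod>i=1..k. real k + 1 - real i) = fact k"
proof -
  have "(\<Prod>i=1..k. real k + 1 - real i) = (\<Prod>i=1..k. real i)"
  proof (rule prod.reindex_bij_witness[where i="\<lambda>i. Suc k - i" and j="\<lambda>i. Suc k - i"])
    fix i assume "i \<in> {1..k}"
    then show "real (Suc k - i) = real k + 1 - real i" by (simp add: of_nat_diff)
  qed auto
  then show ?thesis by (simp add: fact_prod)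
qed

lemma prod_lessThan_diff: "(\<Prod>l<m. real l - real m) = (-1) ^ m * fact m"
proof (induction m)
  case (Suc m)
  have "(\<Prod>l<Suc m. real l - real (Suc m)) = - real (Suc m) * (\<Prod>l<m. real l - real m)"
    by (subst prod.lessThan_Suc_shift) simp
  then show ?case using Suc by (simp add: algebra_simps)
qed simp

lemma prod_greaterThanAtMost_diff:
  "m \<le> k \<Longrightarrow> (\<Prod>l\<in>{m<..k}. real l - real m) = fact (k - m)"
proof (induction k)
  case (Suc k)
  show ?case
  proof (cases "m = Suc k")
    case False
    then have "m \<le> k" "{m<..Suc k} = insert (Suc k) {m<..k}" using Suc.prems by auto
    then have "(\<Prod>l\<in>{m<..Suc k}. real l - real m) = real (Suc (k - m)) * fact (k - m)"
      using Suc.IH by (simp add: of_nat_diff)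
    also have "\<dots> = fact (Suc k - m)"
      using \<open>m \<le> k\<close> by (simp add: Suc_diff_le del: of_nat_Suc)
    finally show ?thesis .
  qed simp
qed simp

lemma prod_atMost_remove_diff:
  assumes "m \<le> k"
  shows "(\<Prod>l\<in>{..k} - {m}. real l - real m) = (-1) ^ m * fact m * fact (k - m)"
proof -
  have split: "{..k} - {m} = {..<m} \<union> {m<..k}" using assms by auto
  have "(\<Prod>l\<in>{..k} - {m}. real l - real m)
        = (\<Prod>l<m. real l - real m) * (\<Prod>l\<in>{m<..k}. real l - real m)"
    unfolding split by (rule prod.union_disjoint) auto
  then show ?thesis
    using prod_lessThan_diff[of m] prod_greaterThanAtMost_diff[OF assms] by simp
qed

section \<open>Shifted Legendre polynomials\<close>

definition shifted_legendre_coeff :: "nat \<Rightarrow> nat \<Rightarrow> real" where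
  "shifted_legendre_coeff k i = (-1) ^ (k + i) * real (k choose i) * real ((k + i) choose i)"

text \<open>shifted_legendre k t = P_k(2t - 1), where P_k is the Legendre polynomial.\<close>

definition shifted_legendre :: "nat \<Rightarrow> real \<Rightarrow> real" where
  "shifted_legendre k t = (\<Sum>i\<le>k. shifted_legendre_coeff k i * t ^ i)"

lemma shifted_legendre_coeff_eq_0: "k < i \<Longrightarrow> shifted_legendre_coeff k i = 0"
  by (simp add: shifted_legendre_coeff_def)

lemma shifted_legendre_coeff_0: "shifted_legendre_coeff k 0 = (-1) ^ k"
  by (simp add: shifted_legendre_coeff_def)

lemma shifted_legendre_coeff_1:
  "shifted_legendre_coeff k 1 = (-1) ^ Suc k * (real k * real (Suc k))"
  by (simp add: shifted_legendre_coeff_def)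

lemma shifted_legendre_coeff_1_sq: "shifted_legendre_coeff k 1 ^ 2 = real k ^ 2 * real (k + 1) ^ 2"
  unfolding shifted_legendre_coeff_1 by (simp add: power_mult_distrib power2_eq_square)

lemma shifted_legendre_coeff_diag: "shifted_legendre_coeff k k = real ((2 * k) choose k)"
  by (simp add: shifted_legendre_coeff_def mult_2)

lemma shifted_legendre_coeff_times_fact:
  assumes "m \<le> k"
  shows "shifted_legendre_coeff k m * ((-1) ^ m * fact m * fact (k - m)) = (-1) ^ k * fact (m + k) / fact m"
proof -
  have "real (k choose m) * real ((k + m) choose m) * (fact m * fact (k - m))
        = (fact m * fact (k - m) * real (k choose m)) * real ((k + m) choose m)"
    by (simp only: ac_simps)
  also have "\<dots> = fact m * fact k * real ((k + m) choose m) / fact m"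
    using arg_cong[OF binomial_fact_lemma[OF assms], of real] by simp
  also have "\<dots> = fact (m + k) / fact m"
    using arg_cong[OF binomial_fact_lemma[of m "k + m"], of real] by (simp add: add.commute)
  finally have "real (k choose m) * real ((k + m) choose m) * (fact m * fact (k - m)) = fact (m + k) / fact m" .
  moreover have "(-1) ^ (k + m) * (-1) ^ m = ((-1) ^ k :: real)"
    by (simp add: power_add mult.assoc)
  ultimately show ?thesis
    unfolding shifted_legendre_coeff_def
    by (metis (no_types, lifting) mult.assoc mult.left_commute times_divide_eq_right)
qed

lemma sum_shifted_legendre_coeff_prod:
  fixes x :: real
  shows "(\<Sum>i\<le>k. shifted_legendre_coeff k i * (\<Prod>l\<in>{..k} - {i}. x + real l))
         = (\<Prod>i=1..k. x - real i)"
proof -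
  define p :: "real poly" where
    "p = (\<Sum>i\<le>k. smult (shifted_legendre_coeff k i) (\<Prod>l\<in>{..k} - {i}. [:real l, 1:]))"
  define q :: "real poly" where "q = (\<Prod>i=1..k. [:- real i, 1:])"
  have poly_p: "poly p y = (\<Sum>i\<le>k. shifted_legendre_coeff k i * (\<Prod>l\<in>{..k} - {i}. y + real l))" for y
    by (simp add: p_def poly_sum poly_prod add.commute)
  have poly_q: "poly q y = (\<Prod>i=1..k. y - real i)" for y
    by (simp add: q_def poly_prod)
  have "degree p \<le> k"
    unfolding p_def
  proof (intro degree_sum_le)
    fix i assume "i \<in> {..k}"
    have "degree (\<Prod>l\<in>{..k} - {i}. [:real l, 1:]) \<le> card ({..k} - {i})"
      using degree_prod_sum_le[of "{..k} - {i}" "\<lambda>l. [:real l, 1:]"] by (simp add: o_def)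
    also have "\<dots> \<le> k" using \<open>i \<in> {..k}\<close> by simp
    finally show "degree (smult (shifted_legendre_coeff k i) (\<Prod>l\<in>{..k} - {i}. [:real l, 1:])) \<le> k"
      using degree_smult_le order_trans by blast
  qed simp
  moreover have "degree q \<le> k"
    using degree_prod_sum_le[of "{1..k}" "\<lambda>i. [:- real i, 1:]"] by (simp add: q_def o_def)
  moreover have "card ((\<lambda>m. - real m) ` {..k}) = Suc k"
    by (subst card_image) (auto simp: inj_on_def)
  moreover have "poly p (- real m) = poly q (- real m)" if "m \<le> k" for m
  proof -
    have "poly p (- real m) = shifted_legendre_coeff k m * (\<Prod>l\<in>{..k} - {m}. real l - real m)"
      unfolding poly_p using that
      by (subst sum.remove[of _ m]) (auto intro!: sum.neutral prod_zero bexI[of _ m])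
    also have "\<dots> = (-1) ^ k * fact (m + k) / fact m"
      using prod_atMost_remove_diff[OF that] shifted_legendre_coeff_times_fact[OF that] by simp
    also have "\<dots> = (\<Prod>i=1..k. (-1) * (real m + real i))"
      by (simp only: prod.distrib prod_constant card_atLeastAtMost prod_atLeast1_atMost_plus) simp
    also have "\<dots> = poly q (- real m)"
      unfolding poly_q by (intro prod.cong) auto
    finally show ?thesis .
  qed
  ultimately have "p = q"
    by (intro poly_eqI_degree[of "(\<lambda>m. - real m) ` {..k}"]) auto
  then show ?thesis using poly_p poly_q by metis
qed

text \<open>
  Dividing the previous identity by \<Prod>l\<le>k. (x + l) gives the partial fraction expansion of
  \<Prod>i=1..k. (x - i) / \<Prod>l\<le>k. (x + l). At x = j + 1 the left-hand side is the integral of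
  Q_k(t) t^j over [0,1], and the numerator vanishes for j < k: this is the orthogonality of Q_k
  to lower powers.
\<close>

lemma sum_shifted_legendre_coeff_div:
  assumes "j \<le> k"
  shows "(\<Sum>i\<le>k. shifted_legendre_coeff k i / (real i + real j + 1))
         = (if j < k then 0 else fact k ^ 2 / fact (2 * k + 1))"
proof -
  define x where "x = real j + 1"
  define D where "D = (\<Prod>l\<le>k. x + real l)"
  have "D > 0" unfolding D_def x_def by (intro prod_pos) auto
  have "shifted_legendre_coeff k i / (real i + real j + 1)
        = shifted_legendre_coeff k i * (\<Prod>l\<in>{..k} - {i}. x + real l) / D" if "i \<le> k" for i
  proof -
    define P where "P = (\<Prod>l\<in>{..k} - {i}. x + real l)"
    have "P > 0" unfolding P_def x_def by (intro prod_pos) auto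
    have "D = (x + real i) * P"
      unfolding D_def P_def using that by (subst prod.remove[of _ i]) auto
    moreover have "real i + real j + 1 = x + real i" by (simp add: x_def)
    ultimately show ?thesis
      using \<open>P > 0\<close> unfolding P_def[symmetric] by simp
  qed
  then have "(\<Sum>i\<le>k. shifted_legendre_coeff k i / (real i + real j + 1))
      = (\<Sum>i\<le>k. shifted_legendre_coeff k i * (\<Prod>l\<in>{..k} - {i}. x + real l)) / D"
    unfolding sum_divide_distrib by (intro sum.cong) auto
  also have "\<dots> = (\<Prod>i=1..k. x - real i) / D"
    by (simp only: sum_shifted_legendre_coeff_prod)
  also have "\<dots> = (if j < k then 0 else fact k ^ 2 / fact (2 * k + 1))"
  proof (cases "j < k")
    case True
    then have "(\<Prod>i=1..k. x - real i) = 0"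
      unfolding x_def by (intro prod_zero bexI[of _ "j + 1"]) auto
    then show ?thesis using True by simp
  next
    case False
    then have "j = k" using assms by simp
    have "(\<Prod>i=1..k. x - real i) = fact k"
      unfolding x_def \<open>j = k\<close> by (rule prod_atLeast1_atMost_Suc_diff)
    moreover have "D = fact (2 * k + 1) / fact k"
      unfolding D_def x_def \<open>j = k\<close> prod_atMost_plus_fact
      by (simp only: mult_2 add_Suc_right Suc_eq_plus1 add.assoc)
    ultimately show ?thesis using False by (simp add: power2_eq_square)
  qed
  finally show ?thesis .
qed

lemma has_integral_power:
  fixes a b :: real
  assumes "a \<le> b"
  shows "((\<lambda>t. t ^ k) has_integral (b ^ Suc k - a ^ Suc k) / Suc k) {a..b}"
proof -
  have "((\<lambda>t. t ^ Suc k / Suc k) has_real_derivative t ^ k) (at t)" for t :: real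
    using DERIV_cdivide[OF DERIV_pow[of "Suc k" t], of "real (Suc k)"] by simp
  then have "((\<lambda>t. t ^ k) has_integral (b ^ Suc k / Suc k - a ^ Suc k / Suc k)) {a..b}"
    using assms
    by (intro fundamental_theorem_of_calculus)
       (auto simp: has_real_derivative_iff_has_vector_derivative[symmetric] intro: has_field_derivative_at_within)
  then show ?thesis by (simp add: diff_divide_distrib)
qed

lemma has_integral_shifted_legendre_mult_power:
  assumes "j \<le> k"
  shows "((\<lambda>t. shifted_legendre k t * t ^ j) has_integral
           (if j < k then 0 else fact k ^ 2 / fact (2 * k + 1))) {0..1}"
proof -
  have "((\<lambda>t. \<Sum>i\<le>k. shifted_legendre_coeff k i * t ^ (i + j)) has_integral
         (\<Sum>i\<le>k. shifted_legendre_coeff k i * ((1 ^ Suc (i + j) - 0 ^ Suc (i + j)) / Suc (i + j)))) {0..1}"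
    by (intro has_integral_sum has_integral_mult_right has_integral_power) auto
  moreover have "(\<Sum>i\<le>k. shifted_legendre_coeff k i * ((1 ^ Suc (i + j) - 0 ^ Suc (i + j)) / Suc (i + j)))
                 = (\<Sum>i\<le>k. shifted_legendre_coeff k i / (real i + real j + 1))"
    by (intro sum.cong) (simp_all add: add_ac)
  moreover have "(\<lambda>t. \<Sum>i\<le>k. shifted_legendre_coeff k i * t ^ (i + j)) = (\<lambda>t. shifted_legendre k t * t ^ j)"
    by (auto simp: shifted_legendre_def sum_distrib_right power_add mult.assoc)
  ultimately show ?thesis
    using sum_shifted_legendre_coeff_div[OF assms] by simp
qed

lemma shifted_legendre_coeff_diag_times:
  "shifted_legendre_coeff k k * (fact k ^ 2 / fact (2 * k + 1)) = 1 / (2 * real k + 1)"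
proof -
  have "shifted_legendre_coeff k k = fact (2 * k) / (fact k * fact k)"
    using binomial_fact[of k "2 * k"] by (simp add: shifted_legendre_coeff_diag mult_2)
  moreover have "fact (2 * k + 1) = (2 * real k + 1) * (fact (2 * k) :: real)" by simp
  moreover have "(fact (2 * k) :: real) > 0" "(fact k :: real) > 0" by auto
  ultimately show ?thesis by (simp add: power2_eq_square)
qed

lemma has_integral_shifted_legendre_mult:
  "((\<lambda>t. shifted_legendre k t * shifted_legendre m t) has_integral
     (if k = m then 1 / (2 * real k + 1) else 0)) {0..1}"
proof -
  have orth_le: "((\<lambda>t. shifted_legendre k t * shifted_legendre m t) has_integral
                   (if k = m then 1 / (2 * real k + 1) else 0)) {0..1}" if "m \<le> k" for k m
  proof -
    have "((\<lambda>t. \<Sum>i\<le>m. shifted_legendre_coeff m i * (shifted_legendre k t * t ^ i)) has_integral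
           (\<Sum>i\<le>m. shifted_legendre_coeff m i * (if i < k then 0 else fact k ^ 2 / fact (2 * k + 1)))) {0..1}"
      using that by (intro has_integral_sum has_integral_mult_right has_integral_shifted_legendre_mult_power) auto
    moreover have "(\<lambda>t. \<Sum>i\<le>m. shifted_legendre_coeff m i * (shifted_legendre k t * t ^ i))
                   = (\<lambda>t. shifted_legendre k t * shifted_legendre m t)"
      by (auto simp: shifted_legendre_def[of m] sum_distrib_left ac_simps)
    moreover have "(\<Sum>i\<le>m. shifted_legendre_coeff m i * (if i < k then 0 else fact k ^ 2 / fact (2 * k + 1)))
                   = (if k = m then 1 / (2 * real k + 1) else 0)"
      using that shifted_legendre_coeff_diag_times[of k]
      by (cases "k = m") (auto intro!: sum.neutral simp: sum.remove[of _ k])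
    ultimately show ?thesis by simp
  qed
  show ?thesis
  proof (cases "m \<le> k")
    case False
    then show ?thesis
      using orth_le[of k m] by (simp add: mult.commute)
  qed (rule orth_le)
qed

section \<open>The polynomial representing the derivative at 0\<close>

definition markov_sum :: "nat \<Rightarrow> real" where
  "markov_sum n = (\<Sum>k<n. real k ^ 2 * real (k + 1) ^ 2 * real (2 * k + 1))"

text \<open>
  The coefficients of the polynomial K of the introduction; shifted_legendre_coeff k 1 = Q_k'(0).
\<close>

definition deriv_kernel_coeff :: "nat \<Rightarrow> nat \<Rightarrow> real" where
  "deriv_kernel_coeff n i =
     (\<Sum>k<n. (2 * real k + 1) * shifted_legendre_coeff k 1 * shifted_legendre_coeff k i)"

lemma shifted_legendre_eq_sum_lessThan:
  assumes "k < n"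
  shows "shifted_legendre k t = (\<Sum>i<n. shifted_legendre_coeff k i * t ^ i)"
proof -
  have "(\<Sum>i<n. shifted_legendre_coeff k i * t ^ i)
        = (\<Sum>i\<le>k. shifted_legendre_coeff k i * t ^ i)
          + (\<Sum>i\<in>{..<n} - {..k}. shifted_legendre_coeff k i * t ^ i)"
    using assms by (subst sum.subset_diff[of "{..k}"]) auto
  also have "(\<Sum>i\<in>{..<n} - {..k}. shifted_legendre_coeff k i * t ^ i) = 0"
    by (intro sum.neutral) (auto simp: shifted_legendre_coeff_eq_0)
  finally show ?thesis by (simp add: shifted_legendre_def)
qed

lemma sum_deriv_kernel_coeff_power:
  "(\<Sum>i<n. deriv_kernel_coeff n i * t ^ i)
   = (\<Sum>k<n. (2 * real k + 1) * shifted_legendre_coeff k 1 * shifted_legendre k t)"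
proof -
  have "(\<Sum>k<n. (2 * real k + 1) * shifted_legendre_coeff k 1 * shifted_legendre k t)
        = (\<Sum>k<n. \<Sum>i<n. (2 * real k + 1) * shifted_legendre_coeff k 1 * (shifted_legendre_coeff k i * t ^ i))"
    by (intro sum.cong refl) (simp add: shifted_legendre_eq_sum_lessThan sum_distrib_left)
  also have "\<dots> = (\<Sum>i<n. deriv_kernel_coeff n i * t ^ i)"
    by (subst sum.swap) (simp add: deriv_kernel_coeff_def sum_distrib_right mult.assoc)
  finally show ?thesis ..
qed

lemma deriv_kernel_coeff_1: "deriv_kernel_coeff n 1 = markov_sum n"
  unfolding deriv_kernel_coeff_def markov_sum_def mult.assoc
    power2_eq_square[symmetric] shifted_legendre_coeff_1_sq
  by (simp add: ac_simps)

lemma deriv_kernel_coeff_0_neg: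
  assumes "2 \<le> n"
  shows "deriv_kernel_coeff n 0 < 0"
proof -
  have "deriv_kernel_coeff n 0 = - (\<Sum>k<n. (2 * real k + 1) * (real k * real (k + 1)))"
    unfolding deriv_kernel_coeff_def shifted_legendre_coeff_0 shifted_legendre_coeff_1
    by (simp add: mult_ac flip: sum_negf)
  moreover have "(2 * real 1 + 1) * (real 1 * real (1 + 1)) \<le> (\<Sum>k<n. (2 * real k + 1) * (real k * real (k + 1)))"
    using assms by (intro member_le_sum) auto
  ultimately show ?thesis by simp
qed

lemma has_integral_deriv_kernel_sq:
  "((\<lambda>t. (\<Sum>i<n. deriv_kernel_coeff n i * t ^ i) ^ 2) has_integral markov_sum n) {0..1}"
proof -
  define w where "w k = (2 * real k + 1) * shifted_legendre_coeff k 1" for k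
  have "((\<lambda>t. \<Sum>k<n. \<Sum>m<n. w k * w m * (shifted_legendre k t * shifted_legendre m t)) has_integral
         (\<Sum>k<n. \<Sum>m<n. w k * w m * (if k = m then 1 / (2 * real k + 1) else 0))) {0..1}"
    by (intro has_integral_sum has_integral_mult_right has_integral_shifted_legendre_mult) auto
  moreover have "(\<lambda>t. \<Sum>k<n. \<Sum>m<n. w k * w m * (shifted_legendre k t * shifted_legendre m t))
                 = (\<lambda>t. (\<Sum>i<n. deriv_kernel_coeff n i * t ^ i) ^ 2)"
    unfolding sum_deriv_kernel_coeff_power by (auto simp: w_def power2_eq_square sum_product ac_simps)
  moreover have "(\<Sum>k<n. \<Sum>m<n. w k * w m * (if k = m then 1 / (2 * real k + 1) else 0))
                 = (\<Sum>k<n. (2 * real k + 1) * shifted_legendre_coeff k 1 ^ 2)"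
    by (intro sum.cong refl) (simp add: if_distrib sum.delta w_def power2_eq_square cong: if_cong)
  moreover have "\<dots> = markov_sum n"
    unfolding markov_sum_def shifted_legendre_coeff_1_sq by (intro sum.cong refl) simp
  ultimately show ?thesis by simp
qed

section \<open>Exponential sums close to a polynomial\<close>

definition poly_expsum :: "nat \<Rightarrow> (nat \<Rightarrow> real) \<Rightarrow> real \<Rightarrow> real \<Rightarrow> real \<Rightarrow> complex" where
  "poly_expsum n \<kappa> c \<delta> t =
     exp (\<i> * of_real (c * t))
     * (\<Sum>i<n. of_real (\<kappa> i) * ((exp (\<i> * of_real (\<delta> * t)) - 1) / (\<i> * of_real \<delta>)) ^ i)"

lemma poly_expsum_eq_expsum:
  "poly_expsum n \<kappa> c \<delta> =
     expsum n (\<lambda>j. \<Sum>i<n. of_real (\<kappa> i) / (\<i> * of_real \<delta>) ^ i * of_nat (i choose j) * (-1) ^ (i - j))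
              (\<lambda>j. c + real j * \<delta>)"
proof
  fix t
  define E where "E = exp (\<i> * complex_of_real (\<delta> * t))"
  define B where "B = \<i> * complex_of_real \<delta>"
  define X where "X = exp (\<i> * complex_of_real (c * t))"
  have XE: "X * E ^ j = exp (\<i> * complex_of_real ((c + real j * \<delta>) * t))" for j
  proof -
    have "X * E ^ j = exp (\<i> * complex_of_real (c * t) + of_nat j * (\<i> * complex_of_real (\<delta> * t)))"
      unfolding X_def E_def by (simp add: exp_add exp_of_nat_mult)
    also have "\<i> * complex_of_real (c * t) + of_nat j * (\<i> * complex_of_real (\<delta> * t))
               = \<i> * complex_of_real ((c + real j * \<delta>) * t)"
      by (simp add: algebra_simps)
    finally show ?thesis .
  qed
  have binomial: "((E - 1) / B) ^ i = (\<Sum>j<n. of_nat (i choose j) * E ^ j * (-1) ^ (i - j)) / B ^ i"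
    if "i < n" for i
  proof -
    have "(E - 1) ^ i = (\<Sum>j\<le>i. of_nat (i choose j) * E ^ j * (-1) ^ (i - j))"
      using binomial_ring[of E "-1" i] by simp
    also have "\<dots> = (\<Sum>j<n. of_nat (i choose j) * E ^ j * (-1) ^ (i - j))"
      using that by (intro sum.mono_neutral_left) auto
    finally show ?thesis by (simp add: power_divide)
  qed
  have "X * (\<Sum>i<n. complex_of_real (\<kappa> i) * ((E - 1) / B) ^ i)
        = (\<Sum>i<n. \<Sum>j<n. complex_of_real (\<kappa> i) / B ^ i * of_nat (i choose j) * (-1) ^ (i - j) * (X * E ^ j))"
    unfolding sum_distrib_left
    by (intro sum.cong refl) (simp add: binomial sum_distrib_left sum_divide_distrib algebra_simps)
  also have "\<dots> = (\<Sum>j<n. \<Sum>i<n. complex_of_real (\<kappa> i) / B ^ i * of_nat (i choose j) * (-1) ^ (i - j) * (X * E ^ j))"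
    by (rule sum.swap)
  finally show "poly_expsum n \<kappa> c \<delta> t = expsum n (\<lambda>j. \<Sum>i<n. of_real (\<kappa> i) / (\<i> * of_real \<delta>) ^ i
                  * of_nat (i choose j) * (-1) ^ (i - j)) (\<lambda>j. c + real j * \<delta>) t"
    unfolding poly_expsum_def expsum_def XE[symmetric]
    by (simp add: X_def E_def B_def sum_distrib_right)
qed

lemma poly_expsum_in_Tn:
  assumes "0 < c" "0 < \<delta>" "c + real n * \<delta> \<le> \<eta>"
  shows "poly_expsum n \<kappa> c \<delta> \<in> Tn n \<eta>"
  unfolding Tn_def poly_expsum_eq_expsum
proof (intro CollectI exI conjI allI impI)
  show "strict_mono_on {..<n} (\<lambda>j. c + real j * \<delta>)"
    using assms by (intro strict_mono_onI) auto
  fix j assume "j < n"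
  show "0 < c + real j * \<delta>" using assms by (simp add: add_pos_nonneg)
  have "real j * \<delta> < real n * \<delta>" using \<open>j < n\<close> assms by simp
  then show "c + real j * \<delta> < \<eta>" using assms by linarith
qed (rule refl)

lemma poly_expsum_at_0:
  assumes "0 < n"
  shows "poly_expsum n \<kappa> c \<delta> 0 = of_real (\<kappa> 0)"
  using assms by (simp add: poly_expsum_def power_0_left if_distrib sum.delta cong: if_cong)

lemma continuous_on_poly_expsum: "continuous_on A (poly_expsum n \<kappa> c \<delta>)"
  unfolding poly_expsum_def divide_inverse by (intro continuous_intros)

lemma poly_expsum_has_vector_derivative_0:
  assumes "2 \<le> n" "\<delta> \<noteq> 0"
  shows "(poly_expsum n \<kappa> c \<delta> has_vector_derivative \<i> * of_real c * of_real (\<kappa> 0) + of_real (\<kappa> 1)) (at 0)"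
proof -
  define B where "B = \<i> * complex_of_real \<delta>"
  define g where "g z = (exp (B * z) - 1) / B" for z
  define P where "P w = (\<Sum>i<n. complex_of_real (\<kappa> i) * w ^ i)" for w
  define F where "F z = exp (\<i> * complex_of_real c * z) * P (g z)" for z
  have "B \<noteq> 0" using assms by (simp add: B_def)
  have "g 0 = 0" by (simp add: g_def)
  have P_0: "P 0 = complex_of_real (\<kappa> 0)"
    using assms by (simp add: P_def power_0_left if_distrib sum.delta cong: if_cong)
  have "(\<Sum>i<n. complex_of_real (\<kappa> i) * (of_nat i * 0 ^ (i - 1)))
        = (\<Sum>i<n. if i = 1 then complex_of_real (\<kappa> 1) else 0)"
    by (intro sum.cong) (auto simp: power_0_left)
  also have "\<dots> = complex_of_real (\<kappa> 1)" using assms by simp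
  finally have deriv_P_0: "(\<Sum>i<n. complex_of_real (\<kappa> i) * (of_nat i * 0 ^ (i - 1))) = complex_of_real (\<kappa> 1)" .
  have deriv_P: "(P has_field_derivative (\<Sum>i<n. complex_of_real (\<kappa> i) * (of_nat i * w ^ (i - 1)))) (at w)" for w
    unfolding P_def by (auto intro!: derivative_eq_intros sum.cong simp: ac_simps)
  have deriv_g: "(g has_field_derivative 1) (at 0)"
    unfolding g_def using \<open>B \<noteq> 0\<close> by (auto intro!: derivative_eq_intros)
  have "((\<lambda>z. P (g z)) has_field_derivative complex_of_real (\<kappa> 1)) (at 0)"
    using DERIV_chain2[OF deriv_P[of "g 0"] deriv_g] deriv_P_0 unfolding \<open>g 0 = 0\<close> by simp
  then have "(F has_field_derivative \<i> * complex_of_real c * complex_of_real (\<kappa> 0) + complex_of_real (\<kappa> 1)) (at 0)"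
    unfolding F_def using P_0 \<open>g 0 = 0\<close>
    by (auto intro!: derivative_eq_intros simp: algebra_simps)
  moreover have "poly_expsum n \<kappa> c \<delta> = (\<lambda>t. F (complex_of_real t))"
    by (auto simp: poly_expsum_def F_def P_def g_def B_def mult.assoc)
  ultimately show ?thesis
    using has_vector_derivative_real_field[of F _ 0 UNIV] by simp
qed

lemma norm_poly_expsum_le:
  assumes "0 < \<delta>" "\<delta> \<le> 1" "0 \<le> t" "t \<le> 1"
  shows "cmod (poly_expsum n \<kappa> c \<delta> t) \<le> \<bar>\<Sum>i<n. \<kappa> i * t ^ i\<bar> + (\<Sum>i<n. \<bar>\<kappa> i\<bar> * real i) * \<delta>"
proof -
  define p where "p = (\<Sum>i<n. \<kappa> i * t ^ i)"
  define z where "z = (exp (\<i> * complex_of_real (\<delta> * t)) - 1) / (\<i> * complex_of_real \<delta>)"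
  have norm_B: "cmod (\<i> * complex_of_real \<delta>) = \<delta>" using assms by (simp add: norm_mult)
  have "cmod (iexp (\<delta> * t) - 1) \<le> \<delta> * t"
    using iexp_approx1[of "\<delta> * t" 0] assms by (simp add: abs_mult)
  then have "cmod z \<le> t"
    unfolding z_def using norm_B assms by (simp add: norm_divide divide_le_eq mult.commute)
  then have "cmod z \<le> 1" using assms by linarith
  have "cmod (iexp (\<delta> * t) - (1 + \<i> * complex_of_real (\<delta> * t))) \<le> (\<delta> * t) ^ 2 / 2"
    using iexp_approx1[of "\<delta> * t" 1] assms by (simp add: power2_abs power2_eq_square)
  moreover have "z - complex_of_real t = (iexp (\<delta> * t) - (1 + \<i> * complex_of_real (\<delta> * t))) / (\<i> * complex_of_real \<delta>)"
    unfolding z_def using assms by (simp add: field_simps)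
  ultimately have "cmod (z - complex_of_real t) \<le> \<delta> * t ^ 2 / 2"
    using norm_B assms by (simp add: norm_divide divide_le_eq power2_eq_square mult_ac)
  also have "\<dots> \<le> \<delta>"
    using assms mult_left_le[of "t ^ 2 / 2" \<delta>] power_le_one[of t 2] by simp
  finally have "cmod (z - complex_of_real t) \<le> \<delta>" .
  have "cmod ((\<Sum>i<n. complex_of_real (\<kappa> i) * z ^ i) - complex_of_real p)
        = cmod (\<Sum>i<n. complex_of_real (\<kappa> i) * (z ^ i - complex_of_real t ^ i))"
    unfolding p_def by (simp add: sum_subtractf algebra_simps)
  also have "\<dots> \<le> (\<Sum>i<n. cmod (complex_of_real (\<kappa> i) * (z ^ i - complex_of_real t ^ i)))"
    by (rule norm_sum)
  also have "\<dots> \<le> (\<Sum>i<n. \<bar>\<kappa> i\<bar> * real i * \<delta>)"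
  proof (intro sum_mono)
    fix i
    have "cmod (z ^ i - complex_of_real t ^ i) \<le> real i * cmod (z - complex_of_real t)"
      using \<open>cmod z \<le> 1\<close> assms by (intro norm_power_diff) auto
    also have "\<dots> \<le> real i * \<delta>"
      using \<open>cmod (z - complex_of_real t) \<le> \<delta>\<close> by (intro mult_left_mono) auto
    finally show "cmod (complex_of_real (\<kappa> i) * (z ^ i - complex_of_real t ^ i)) \<le> \<bar>\<kappa> i\<bar> * real i * \<delta>"
      by (simp add: norm_mult mult.assoc mult_left_mono)
  qed
  finally have "cmod (\<Sum>i<n. complex_of_real (\<kappa> i) * z ^ i) \<le> \<bar>p\<bar> + (\<Sum>i<n. \<bar>\<kappa> i\<bar> * real i) * \<delta>"
    using norm_triangle_sub[of "\<Sum>i<n. complex_of_real (\<kappa> i) * z ^ i" "complex_of_real p"]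
    by (simp add: sum_distrib_right)
  then show ?thesis
    by (simp add: poly_expsum_def z_def p_def norm_mult)
qed

lemma integral_norm_sq_pos:
  fixes g :: "real \<Rightarrow> 'a::real_normed_vector"
  assumes "continuous_on {0..1} g" "g 0 \<noteq> 0"
  shows "0 < integral {0..1} (\<lambda>t. norm (g t) ^ 2)"
proof -
  have cont: "continuous_on {0..1} (\<lambda>t. norm (g t) ^ 2)"
    using assms(1) by (intro continuous_intros)
  have "integral {0..1} (\<lambda>t. norm (g t) ^ 2) \<noteq> 0"
    using integral_eq_0_iff[OF cont] assms(2) by auto
  moreover have "0 \<le> integral {0..1} (\<lambda>t. norm (g t) ^ 2)"
    using cont by (intro integral_nonneg integrable_continuous_interval) auto
  ultimately show ?thesis by simp
qed

lemma integral_poly_sq_pos: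
  fixes \<kappa> :: "nat \<Rightarrow> real"
  assumes "0 < n" "\<kappa> 0 \<noteq> 0" "((\<lambda>t. (\<Sum>i<n. \<kappa> i * t ^ i) ^ 2) has_integral I) {0..1}"
  shows "0 < I"
proof -
  have "0 < integral {0..1} (\<lambda>t. norm (\<Sum>i<n. \<kappa> i * t ^ i) ^ 2)"
    using assms(1,2) by (intro integral_norm_sq_pos continuous_intros)
      (simp add: power_0_left if_distrib sum.delta cong: if_cong)
  then show ?thesis using integral_unique[OF assms(3)] by simp
qed

lemma integral_poly_expsum_sq_le:
  assumes "((\<lambda>t. (\<Sum>i<n. \<kappa> i * t ^ i) ^ 2) has_integral I) {0..1}" "0 < \<delta>" "\<delta> \<le> 1"
  defines "M \<equiv> \<Sum>i<n. \<bar>\<kappa> i\<bar>" and "L \<equiv> \<Sum>i<n. \<bar>\<kappa> i\<bar> * real i"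
  shows "integral {0..1} (\<lambda>t. cmod (poly_expsum n \<kappa> c \<delta> t) ^ 2)
         \<le> I + (2 * M * L * \<delta> + L ^ 2 * \<delta> ^ 2)"
proof -
  have "L \<ge> 0" unfolding L_def by (intro sum_nonneg) auto
  have pointwise: "cmod (poly_expsum n \<kappa> c \<delta> t) ^ 2
                   \<le> (\<Sum>i<n. \<kappa> i * t ^ i) ^ 2 + (2 * M * L * \<delta> + L ^ 2 * \<delta> ^ 2)"
    if "t \<in> {0..1}" for t
  proof -
    define p where "p = (\<Sum>i<n. \<kappa> i * t ^ i)"
    have "\<bar>p\<bar> \<le> (\<Sum>i<n. \<bar>\<kappa> i * t ^ i\<bar>)" unfolding p_def by (rule sum_abs)
    also have "\<dots> \<le> M"
      unfolding M_def using that
      by (intro sum_mono) (auto simp: abs_mult power_le_one intro: mult_left_le)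
    finally have "\<bar>p\<bar> \<le> M" .
    have "cmod (poly_expsum n \<kappa> c \<delta> t) ^ 2 \<le> (\<bar>p\<bar> + L * \<delta>) ^ 2"
      using norm_poly_expsum_le[of \<delta> t n \<kappa> c] assms that
      by (intro power_mono) (auto simp: p_def L_def)
    also have "\<dots> = p ^ 2 + 2 * \<bar>p\<bar> * L * \<delta> + L ^ 2 * \<delta> ^ 2"
      by (simp add: power2_eq_square algebra_simps)
    also have "\<dots> \<le> p ^ 2 + 2 * M * L * \<delta> + L ^ 2 * \<delta> ^ 2"
      using \<open>\<bar>p\<bar> \<le> M\<close> \<open>L \<ge> 0\<close> assms by (simp add: mult_right_mono)
    finally show ?thesis by (simp add: p_def)
  qed
  have bound_integral: "((\<lambda>t. (\<Sum>i<n. \<kappa> i * t ^ i) ^ 2 + (2 * M * L * \<delta> + L ^ 2 * \<delta> ^ 2))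
                          has_integral I + (2 * M * L * \<delta> + L ^ 2 * \<delta> ^ 2)) {0..1}"
    using has_integral_add[OF assms(1) has_integral_const_real[of "2 * M * L * \<delta> + L ^ 2 * \<delta> ^ 2" 0 1]]
    by simp
  have "integral {0..1} (\<lambda>t. cmod (poly_expsum n \<kappa> c \<delta> t) ^ 2)
        \<le> integral {0..1} (\<lambda>t. (\<Sum>i<n. \<kappa> i * t ^ i) ^ 2 + (2 * M * L * \<delta> + L ^ 2 * \<delta> ^ 2))"
    using pointwise bound_integral continuous_on_poly_expsum
    by (intro integral_le integrable_continuous_interval continuous_intros) auto
  then show ?thesis using integral_unique[OF bound_integral] by simp
qed

lemma poly_expsum_deriv_ratio_ge:
  fixes \<kappa> :: "nat \<Rightarrow> real" and n :: nat
  defines "M \<equiv> \<Sum>i<n. \<bar>\<kappa> i\<bar>" and "L \<equiv> \<Sum>i<n. \<bar>\<kappa> i\<bar> * real i"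
  assumes "2 \<le> n" "\<kappa> 0 \<noteq> 0" "0 < \<delta>" "\<delta> \<le> 1"
    and poly_sq: "((\<lambda>t. (\<Sum>i<n. \<kappa> i * t ^ i) ^ 2) has_integral I) {0..1}"
    and error: "\<kappa> 1 ^ 2 * (2 * M * L * \<delta> + L ^ 2 * \<delta> ^ 2) \<le> c ^ 2 * \<kappa> 0 ^ 2 * I"
  shows "\<bar>\<kappa> 1\<bar> / sqrt I
         \<le> cmod (vector_derivative (poly_expsum n \<kappa> c \<delta>) (at 0)) / L2norm01 (poly_expsum n \<kappa> c \<delta>)"
proof -
  define D where "D = \<i> * complex_of_real c * complex_of_real (\<kappa> 0) + complex_of_real (\<kappa> 1)"
  define J where "J = integral {0..1} (\<lambda>t. cmod (poly_expsum n \<kappa> c \<delta> t) ^ 2)"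
  have "0 < I" using assms by (intro integral_poly_sq_pos) auto
  have "0 < J"
    unfolding J_def using assms
    by (intro integral_norm_sq_pos continuous_on_poly_expsum) (simp add: poly_expsum_at_0)
  have "vector_derivative (poly_expsum n \<kappa> c \<delta>) (at 0) = D"
    unfolding D_def using assms
    by (intro vector_derivative_at poly_expsum_has_vector_derivative_0) auto
  have "D = Complex (\<kappa> 1) (c * \<kappa> 0)" unfolding D_def by (simp add: complex_eq_iff)
  then have "cmod D ^ 2 = \<kappa> 1 ^ 2 + c ^ 2 * \<kappa> 0 ^ 2"
    by (simp add: cmod_power2 power_mult_distrib)
  have "J \<le> I + (2 * M * L * \<delta> + L ^ 2 * \<delta> ^ 2)"
    unfolding J_def M_def L_def using poly_sq assms by (intro integral_poly_expsum_sq_le) auto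
  then have "\<kappa> 1 ^ 2 * J \<le> \<kappa> 1 ^ 2 * I + \<kappa> 1 ^ 2 * (2 * M * L * \<delta> + L ^ 2 * \<delta> ^ 2)"
    by (simp add: mult_left_mono flip: distrib_left)
  also have "\<dots> \<le> cmod D ^ 2 * I"
    using error \<open>cmod D ^ 2 = _\<close> by (simp add: algebra_simps)
  finally have "sqrt (\<kappa> 1 ^ 2 * J) \<le> sqrt (cmod D ^ 2 * I)"
    by (rule real_sqrt_le_mono)
  then show ?thesis
    using \<open>0 < I\<close> \<open>0 < J\<close> \<open>vector_derivative _ (at 0) = D\<close>
    by (simp add: L2norm01_def J_def[symmetric] real_sqrt_mult divide_simps)
qed

lemma deriv_ratio_SUP_ge_poly:
  fixes \<kappa> :: "nat \<Rightarrow> real"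
  assumes "2 \<le> n" "0 < \<eta>" "\<kappa> 0 \<noteq> 0"
    and poly_sq: "((\<lambda>t. (\<Sum>i<n. \<kappa> i * t ^ i) ^ 2) has_integral I) {0..1}"
  shows "ereal (\<bar>\<kappa> 1\<bar> / sqrt I)
         \<le> (SUP f \<in> Tn n \<eta> - {(\<lambda>t. 0)}. ereal (cmod (vector_derivative f (at 0)) / L2norm01 f))"
proof -
  define c where "c = \<eta> / 2"
  define M where "M = (\<Sum>i<n. \<bar>\<kappa> i\<bar>)"
  define L where "L = (\<Sum>i<n. \<bar>\<kappa> i\<bar> * real i)"
  have "0 < c" using assms by (simp add: c_def)
  have "0 < I" using assms by (intro integral_poly_sq_pos) auto
  have "((\<lambda>\<delta>. \<delta>) \<longlongrightarrow> 0) (at_right (0::real))"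
    by (rule tendsto_ident_at)
  then have "\<forall>\<^sub>F \<delta> in at_right (0::real). \<delta> < 1"
    by (rule order_tendstoD(2)) simp
  moreover have "((\<lambda>\<delta>. c + real n * \<delta>) \<longlongrightarrow> c) (at_right 0)"
    by (auto intro!: tendsto_eq_intros)
  then have "\<forall>\<^sub>F \<delta> in at_right 0. c + real n * \<delta> < \<eta>"
    by (rule order_tendstoD(2)) (simp add: c_def assms)
  moreover have "((\<lambda>\<delta>. \<kappa> 1 ^ 2 * (2 * M * L * \<delta> + L ^ 2 * \<delta> ^ 2)) \<longlongrightarrow> 0) (at_right 0)"
    by (auto intro!: tendsto_eq_intros)
  then have "\<forall>\<^sub>F \<delta> in at_right 0. \<kappa> 1 ^ 2 * (2 * M * L * \<delta> + L ^ 2 * \<delta> ^ 2) < c ^ 2 * \<kappa> 0 ^ 2 * I"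
    by (rule order_tendstoD(2)) (use \<open>0 < c\<close> \<open>0 < I\<close> assms(3) in simp)
  ultimately have "\<forall>\<^sub>F \<delta> in at_right 0. 0 < \<delta> \<and> \<delta> < 1 \<and> c + real n * \<delta> < \<eta>
                     \<and> \<kappa> 1 ^ 2 * (2 * M * L * \<delta> + L ^ 2 * \<delta> ^ 2) < c ^ 2 * \<kappa> 0 ^ 2 * I"
    by (intro eventually_conj eventually_at_right_less)
  then obtain \<delta> where "0 < \<delta>" "\<delta> < 1" "c + real n * \<delta> < \<eta>"
    and "\<kappa> 1 ^ 2 * (2 * M * L * \<delta> + L ^ 2 * \<delta> ^ 2) < c ^ 2 * \<kappa> 0 ^ 2 * I"
    using eventually_happens'[OF trivial_limit_at_right_real] by blast
  then have "\<bar>\<kappa> 1\<bar> / sqrt I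
             \<le> cmod (vector_derivative (poly_expsum n \<kappa> c \<delta>) (at 0)) / L2norm01 (poly_expsum n \<kappa> c \<delta>)"
    unfolding M_def L_def using assms by (intro poly_expsum_deriv_ratio_ge) auto
  moreover have "poly_expsum n \<kappa> c \<delta> \<in> Tn n \<eta> - {(\<lambda>t. 0)}"
    using \<open>0 < c\<close> \<open>0 < \<delta>\<close> \<open>c + real n * \<delta> < \<eta>\<close> assms
    by (auto dest: fun_cong[of _ _ 0] intro: poly_expsum_in_Tn simp: poly_expsum_at_0)
  ultimately show ?thesis by (intro SUP_upper2) auto
qed

lemma deriv_ratio_SUP_nonneg:
  assumes "1 \<le> n" "0 < \<eta>"
  shows "0 \<le> (SUP f \<in> Tn n \<eta> - {(\<lambda>t. 0)}. ereal (cmod (vector_derivative f (at 0)) / L2norm01 f))"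
proof -
  define f where "f = poly_expsum n (\<lambda>i. if i = 0 then 1 else 0) (\<eta> / 2) (\<eta> / (2 * real n))"
  have "f \<in> Tn n \<eta>"
    unfolding f_def using assms by (intro poly_expsum_in_Tn) auto
  moreover have "f 0 \<noteq> 0"
    unfolding f_def using assms by (simp add: poly_expsum_at_0)
  ultimately have "f \<in> Tn n \<eta> - {(\<lambda>t. 0)}" by auto
  moreover have "0 < integral {0..1} (\<lambda>t. cmod (f t) ^ 2)"
    using \<open>f 0 \<noteq> 0\<close> unfolding f_def by (intro integral_norm_sq_pos continuous_on_poly_expsum)
  ultimately show ?thesis
    by (intro SUP_upper2[of f]) (simp_all add: L2norm01_def)
qed

lemma eps_n_bound_eq_sqrt_markov_sum:
  assumes "1 \<le> n"
  shows "(1 + eps_n n) * 3 powr (-1/2) * real n ^ 3 = sqrt (markov_sum n)"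
proof -
  have "(3::real) powr (-1/2) = inverse (sqrt 3)"
    by (simp add: powr_minus powr_half_sqrt flip: powr_minus_divide)
  moreover have "real n powr (-3) = inverse (real n ^ 3)"
    using assms by (simp add: powr_minus)
  moreover have "1 + eps_n n = sqrt 3 * real n powr (-3) * sqrt (markov_sum n)"
    by (simp add: eps_n_def markov_sum_def)
  ultimately show ?thesis
    using assms by (simp only:) (simp add: field_simps)
qed

theorem theorem5p3:
  fixes n :: nat and \<eta> :: real
  assumes "n \<ge> 1" and "\<eta> > 0"
  shows "(SUP f \<in> Tn n \<eta> - {(\<lambda>t. 0)}.
            ereal (cmod (vector_derivative f (at 0)) / L2norm01 f))
         \<ge> ereal ((1 + eps_n n) * 3 powr (-1/2) * real n ^ 3)"
proof (cases "n = 1")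
  case True
  then have "markov_sum n = 0" by (simp add: markov_sum_def)
  then have "(1 + eps_n n) * 3 powr (-1/2) * real n ^ 3 = 0"
    using eps_n_bound_eq_sqrt_markov_sum[OF assms(1)] by simp
  then show ?thesis
    using deriv_ratio_SUP_nonneg[OF assms] by (simp only: zero_ereal_def)
next
  case False
  then have "2 \<le> n" using assms(1) by simp
  have "markov_sum n \<ge> 0" unfolding markov_sum_def by (intro sum_nonneg) auto
  then have "\<bar>deriv_kernel_coeff n 1\<bar> / sqrt (markov_sum n) = sqrt (markov_sum n)"
    unfolding deriv_kernel_coeff_1 by (simp add: real_div_sqrt)
  then show ?thesis
    using deriv_ratio_SUP_ge_poly[OF \<open>2 \<le> n\<close> assms(2) _ has_integral_deriv_kernel_sq]
      deriv_kernel_coeff_0_neg[OF \<open>2 \<le> n\<close>] eps_n_bound_eq_sqrt_markov_sum[OF assms(1)]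
    by simp
qed

end
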